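(* Let $\operatorname{St}_\eta\subset\mathbb{Z}^{E(\Gamma)}=C_1(\Gamma,\mathbb{Z})$ be the set of $\vec n=(n_e)_{e\in E(\Gamma)}$ such that $$\Big(\prod_{e\in E(\Gamma)}\{k\in\mathbb{Z}: Nn_e\le k\le N(n_e+1)\}\Big)\cap d_\Gamma^{-1}(-\eta)\neq\emptyset .$$ Then for every integer $M>0$, the set $\operatorname{St}_\eta$ is a union of finitely many orbits of the group $H_1(\Gamma,M\mathbb{Z})$ acting on $C_1(\Gamma,\mathbb{Z})$ by translations.
   Context: $\Gamma$ is a finite graph with vertex set $V(\Gamma)$ and edge set $E(\Gamma)$ (loops and multiple edges allowed), with an auxiliary orientation. $C_1(\Gamma,\mathbb{Z})=\mathbb{Z}^{E(\Gamma)}$, $\overline{C}_0(\Gamma,\mathbb{Z})\subset\mathbb{Z}^{V(\Gamma)}$ is the group of integer $0$-chains whose coordinates sum to zero, $d_\Gamma\colon C_1(\Gamma,\mathbb{Z})\to\overline{C}_0(\Gamma,\mathbb{Z})$ is the boundary map, $H_1(\Gamma,\mathbb{Z})=\ker d_\Gamma$ and $H_1(\Gamma,M\mathbb{Z})=H_1(\Gamma,\mathbb{Z})\cap (M\mathbb{Z})^{E(\Gamma)}$. Here $\eta\in\overline{C}_0(\Gamma,\mathbb{Z})$ and $N\geq 1$ is a fixed integer. *)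

theory Defs
  imports Main
begin

text \<open>A finite graph: finite vertex set V, finite edge set E, and an auxiliary
orientation given by source/target maps (loops and multiple edges allowed).\<close>

definition graph :: "'v set \<Rightarrow> 'e set \<Rightarrow> ('e \<Rightarrow> 'v) \<Rightarrow> ('e \<Rightarrow> 'v) \<Rightarrow> bool" where
  "graph V E src tgt \<longleftrightarrow> finite V \<and> finite E \<and> (\<forall>e\<in>E. src e \<in> V \<and> tgt e \<in> V)"

definition C1 :: "'e set \<Rightarrow> ('e \<Rightarrow> int) set" where
  "C1 E = {c. \<forall>e. e \<notin> E \<longrightarrow> c e = 0}"

definition C0bar :: "'v set \<Rightarrow> ('v \<Rightarrow> int) set" where
  "C0bar V = {a. (\<forall>v. v \<notin> V \<longrightarrow> a v = 0) \<and> (\<Sum>v\<in>V. a v) = 0}"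

text \<open>Boundary map: d(e) = tgt e - src e.\<close>
definition bd :: "'v set \<Rightarrow> 'e set \<Rightarrow> ('e \<Rightarrow> 'v) \<Rightarrow> ('e \<Rightarrow> 'v) \<Rightarrow> ('e \<Rightarrow> int) \<Rightarrow> ('v \<Rightarrow> int)" where
  "bd V E src tgt c = (\<lambda>v. if v \<in> V then
      (\<Sum>e\<in>{e\<in>E. tgt e = v}. c e) - (\<Sum>e\<in>{e\<in>E. src e = v}. c e) else 0)"

definition H1M :: "'v set \<Rightarrow> 'e set \<Rightarrow> ('e \<Rightarrow> 'v) \<Rightarrow> ('e \<Rightarrow> 'v) \<Rightarrow> int \<Rightarrow> ('e \<Rightarrow> int) set" where
  "H1M V E src tgt M = {h \<in> C1 E. bd V E src tgt h = (\<lambda>v. 0) \<and> (\<forall>e\<in>E. M dvd h e)}"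

definition St :: "'v set \<Rightarrow> 'e set \<Rightarrow> ('e \<Rightarrow> 'v) \<Rightarrow> ('e \<Rightarrow> 'v) \<Rightarrow> int \<Rightarrow> ('v \<Rightarrow> int) \<Rightarrow> ('e \<Rightarrow> int) set" where
  "St V E src tgt N \<eta> = {n \<in> C1 E. \<exists>k \<in> C1 E.
      (\<forall>e\<in>E. N * n e \<le> k e \<and> k e \<le> N * (n e + 1)) \<and> bd V E src tgt k = (\<lambda>v. - \<eta> v)}"

definition orbit_tr :: "('e \<Rightarrow> int) set \<Rightarrow> ('e \<Rightarrow> int) \<Rightarrow> ('e \<Rightarrow> int) set" where
  "orbit_tr H x = {(\<lambda>e. x e + h e) | h. h \<in> H}"

end

theory Submission
  imports Defs
begin

text \<open>For \<open>n \<in> St\<close> choose a witness \<open>k\<close> and record the pair \<open>(n mod M, k - N n)\<close>.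
  Since \<open>0 \<le> k - N n \<le> N\<close> edgewise, only finitely many records occur. If \<open>n\<close> and \<open>n'\<close>
  have the same record then \<open>h = n' - n\<close> is divisible by \<open>M\<close> and \<open>N h = k' - k\<close> is a cycle,
  so \<open>h \<in> H\<^sub>1(\<Gamma>, M\<int>)\<close>. Conversely, \<open>St\<close> is stable under such translations, with witness
  \<open>k + N h\<close>.\<close>

lemma bd_add: "bd V E s t (\<lambda>e. a e + b e) = (\<lambda>v. bd V E s t a v + bd V E s t b v)"
  by (auto simp: bd_def sum.distrib fun_eq_iff)

lemma bd_diff: "bd V E s t (\<lambda>e. a e - b e) = (\<lambda>v. bd V E s t a v - bd V E s t b v)"
  by (auto simp: bd_def sum_subtractf fun_eq_iff)

lemma bd_mult_left: "bd V E s t (\<lambda>e. c * a e) = (\<lambda>v. c * bd V E s t a v)"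
  by (auto simp: bd_def sum_distrib_left right_diff_distrib fun_eq_iff)

lemma finite_bounded_C1:
  assumes "finite E"
  shows "finite {c \<in> C1 E. \<forall>e\<in>E. a \<le> c e \<and> c e \<le> b}"
proof -
  have "{c \<in> C1 E. \<forall>e\<in>E. a \<le> c e \<and> c e \<le> b} =
      {c. \<forall>e. (e \<in> E \<longrightarrow> c e \<in> {a..b}) \<and> (e \<notin> E \<longrightarrow> c e = 0)}"
    by (auto simp: C1_def)
  then show ?thesis
    using finite_set_of_finite_funs[OF assms finite_atLeastAtMost_int] by simp
qed

lemma finite_union_orbit_tr:
  fixes \<phi> :: "('e \<Rightarrow> int) \<Rightarrow> 'a"
  assumes "finite (\<phi> ` S)"
    and same_orbit: "\<And>x y. x \<in> S \<Longrightarrow> y \<in> S \<Longrightarrow> \<phi> x = \<phi> y \<Longrightarrow> (\<lambda>e. y e - x e) \<in> H"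
    and closed: "\<And>x h. x \<in> S \<Longrightarrow> h \<in> H \<Longrightarrow> (\<lambda>e. x e + h e) \<in> S"
  shows "\<exists>F. finite F \<and> F \<subseteq> S \<and> S = (\<Union>x\<in>F. orbit_tr H x)"
proof (intro exI conjI)
  let ?F = "inv_into S \<phi> ` \<phi> ` S"
  show "finite ?F" using assms(1) by simp
  show "?F \<subseteq> S" by (auto intro: inv_into_into)
  show "S = (\<Union>x\<in>?F. orbit_tr H x)"
  proof
    show "S \<subseteq> (\<Union>x\<in>?F. orbit_tr H x)"
    proof
      fix y assume y: "y \<in> S"
      let ?x = "inv_into S \<phi> (\<phi> y)"
      have "?x \<in> S" "\<phi> ?x = \<phi> y" using y by (simp_all add: inv_into_into f_inv_into_f)
      then have "(\<lambda>e. y e - ?x e) \<in> H" using y same_orbit by blast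
      then have "y \<in> orbit_tr H ?x" unfolding orbit_tr_def by force
      then show "y \<in> (\<Union>x\<in>?F. orbit_tr H x)" using y by blast
    qed
    show "(\<Union>x\<in>?F. orbit_tr H x) \<subseteq> S"
      using \<open>?F \<subseteq> S\<close> closed unfolding orbit_tr_def by blast
  qed
qed

definition St_witness ::
    "'v set \<Rightarrow> 'e set \<Rightarrow> ('e \<Rightarrow> 'v) \<Rightarrow> ('e \<Rightarrow> 'v) \<Rightarrow> int \<Rightarrow> ('v \<Rightarrow> int) \<Rightarrow>
     ('e \<Rightarrow> int) \<Rightarrow> ('e \<Rightarrow> int) \<Rightarrow> bool" where
  "St_witness V E s t N \<eta> n k \<longleftrightarrow> k \<in> C1 E \<and>
     (\<forall>e\<in>E. N * n e \<le> k e \<and> k e \<le> N * (n e + 1)) \<and> bd V E s t k = (\<lambda>v. - \<eta> v)"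

lemma St_iff_witness:
  "n \<in> St V E s t N \<eta> \<longleftrightarrow> n \<in> C1 E \<and> (\<exists>k. St_witness V E s t N \<eta> n k)"
  by (auto simp: St_def St_witness_def)

lemma St_witness_signature_bounds:
  assumes "n \<in> C1 E" and k: "St_witness V E s t N \<eta> n k" and "M > 0"
  shows "((\<lambda>e. n e mod M), (\<lambda>e. k e - N * n e)) \<in>
    {c \<in> C1 E. \<forall>e\<in>E. 0 \<le> c e \<and> c e \<le> M - 1} \<times> {c \<in> C1 E. \<forall>e\<in>E. 0 \<le> c e \<and> c e \<le> N}"
proof -
  have "0 \<le> n e mod M \<and> n e mod M \<le> M - 1" for e
    using \<open>M > 0\<close> pos_mod_bound[of M "n e"] by simp
  moreover have "0 \<le> k e - N * n e \<and> k e - N * n e \<le> N" if "e \<in> E" for e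
    using k that by (auto simp: St_witness_def distrib_left)
  ultimately show ?thesis
    using \<open>n \<in> C1 E\<close> k by (auto simp: C1_def St_witness_def)
qed

lemma St_translate_H1M:
  assumes "n \<in> St V E s t N \<eta>" and "h \<in> H1M V E s t M"
  shows "(\<lambda>e. n e + h e) \<in> St V E s t N \<eta>"
proof -
  obtain k where n: "n \<in> C1 E" and k: "St_witness V E s t N \<eta> n k"
    using assms(1) St_iff_witness by blast
  have h: "h \<in> C1 E" "bd V E s t h = (\<lambda>v. 0)" using assms(2) by (auto simp: H1M_def)
  have "St_witness V E s t N \<eta> (\<lambda>e. n e + h e) (\<lambda>e. k e + N * h e)"
    using k h by (auto simp: St_witness_def C1_def bd_add bd_mult_left algebra_simps)
  moreover have "(\<lambda>e. n e + h e) \<in> C1 E" using n h by (auto simp: C1_def)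
  ultimately show ?thesis using St_iff_witness by blast
qed

lemma St_witness_same_signature_imp_H1M:
  assumes "N \<noteq> 0" and "n \<in> C1 E" and "n' \<in> C1 E"
    and k: "St_witness V E s t N \<eta> n k" and k': "St_witness V E s t N \<eta> n' k'"
    and mod_eq: "\<And>e. n e mod M = n' e mod M"
    and offset_eq: "\<And>e. k e - N * n e = k' e - N * n' e"
  shows "(\<lambda>e. n' e - n e) \<in> H1M V E s t M"
proof -
  have "(\<lambda>e. N * (n' e - n e)) = (\<lambda>e. k' e - k e)"
    using offset_eq by (auto simp: fun_eq_iff algebra_simps)
  then have "bd V E s t (\<lambda>e. N * (n' e - n e)) = (\<lambda>v. 0)"
    using k k' by (simp add: St_witness_def bd_diff)
  then have "(\<lambda>v. N * bd V E s t (\<lambda>e. n' e - n e) v) = (\<lambda>v. 0)"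
    by (simp only: bd_mult_left)
  then have "bd V E s t (\<lambda>e. n' e - n e) = (\<lambda>v. 0)"
    using \<open>N \<noteq> 0\<close> by (simp add: fun_eq_iff)
  moreover have "M dvd n' e - n e" for e
    using mod_eq[of e, symmetric] by (simp add: mod_eq_dvd_iff)
  moreover have "(\<lambda>e. n' e - n e) \<in> C1 E" using assms(2,3) by (auto simp: C1_def)
  ultimately show ?thesis by (simp add: H1M_def)
qed

theorem lemma2p19:
  fixes V :: "'v set" and E :: "'e set" and src tgt :: "'e \<Rightarrow> 'v"
    and N M :: int and \<eta> :: "'v \<Rightarrow> int"
  assumes "graph V E src tgt"
    and "\<eta> \<in> C0bar V"
    and "N \<ge> 1"
    and "M > 0"
  shows "\<exists>F. finite F \<and> F \<subseteq> C1 E \<and>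
           St V E src tgt N \<eta> = (\<Union>x\<in>F. orbit_tr (H1M V E src tgt M) x)"
proof -
  let ?S = "St V E src tgt N \<eta>"
  let ?B = "\<lambda>b. {c \<in> C1 E. \<forall>e\<in>E. 0 \<le> c e \<and> c e \<le> b}"
  have "finite E" using assms(1) by (simp add: graph_def)
  have "\<forall>n\<in>?S. \<exists>k. St_witness V E src tgt N \<eta> n k" using St_iff_witness by blast
  then obtain K where K: "\<forall>n\<in>?S. St_witness V E src tgt N \<eta> n (K n)" by (rule bchoice[THEN exE])
  define \<phi> where "\<phi> n = ((\<lambda>e. n e mod M), (\<lambda>e. K n e - N * n e))" for n
  have "\<phi> n \<in> ?B (M - 1) \<times> ?B N" if "n \<in> ?S" for n
    using that K St_iff_witness St_witness_signature_bounds[OF _ _ \<open>M > 0\<close>]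
    unfolding \<phi>_def by blast
  then have "finite (\<phi> ` ?S)"
    using finite_bounded_C1[OF \<open>finite E\<close>] by (meson finite_SigmaI finite_subset image_subsetI)
  moreover have "(\<lambda>e. n' e - n e) \<in> H1M V E src tgt M"
    if "n \<in> ?S" "n' \<in> ?S" "\<phi> n = \<phi> n'" for n n'
  proof (rule St_witness_same_signature_imp_H1M)
    show "n \<in> C1 E" "n' \<in> C1 E" using that St_iff_witness by blast+
    show "St_witness V E src tgt N \<eta> n (K n)" "St_witness V E src tgt N \<eta> n' (K n')"
      using that K by blast+
    show "n e mod M = n' e mod M" "K n e - N * n e = K n' e - N * n' e" for e
      using \<open>\<phi> n = \<phi> n'\<close> by (simp_all add: \<phi>_def fun_eq_iff)
  qed (use \<open>N \<ge> 1\<close> in simp)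
  ultimately have "\<exists>F. finite F \<and> F \<subseteq> ?S \<and> ?S = (\<Union>x\<in>F. orbit_tr (H1M V E src tgt M) x)"
    using St_translate_H1M by (rule finite_union_orbit_tr)
  moreover have "?S \<subseteq> C1 E" by (auto simp: St_def)
  ultimately show ?thesis by (meson order_trans)
qed

end
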